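(* Let $(A_C,\mathcal R_A)$ be an autocatalytic core of a CRN. Then its stoichiometric matrix $\overline{\mathbb S}=(\mathbb S)_{A_C}^{\mathcal R_A}$ is a minimal semi-positive matrix.
   Context: A chemical reaction network (CRN) consists of a finite species set $\mathcal S$ and a finite set $\mathcal R$ of reactions; each reaction $r$ is written $r^-\to r^+$ with input complex $r^-\in\mathbb Z_{\ge0}^{\mathcal S}$ and output complex $r^+\in\mathbb Z_{\ge0}^{\mathcal S}$. The input and output matrices $\mathbb S^-,\mathbb S^+$ are the $\mathcal S\times\mathcal R$ matrices whose column indexed by $r$ is $r^-$, resp. $r^+$; the stoichiometric matrix is $\mathbb S=\mathbb S^+-\mathbb S^-$. For a matrix $\mathbb A$ with rows indexed by $\mathcal S$ and columns by $\mathcal R$ and subsets $M\subseteq\mathcal S$, $N\subseteq\mathcal R$, $(\mathbb A)_M^N$ is the submatrix with rows in $M$ and columns in $N$. For a vector $\mathbf v$: $\mathbf v\gg\mathbf 0$ means all entries are $>0$; $\mathbf v>\mathbf 0$ (semi-positive) means all entries are $\ge0$ and $\mathbf v\ne\mathbf 0$. A motif is a pair $(\mathcal M,\mathcal R')$ with $\mathcal M\subseteq\mathcal S$, $\mathcal R'\subseteq\mathcal R$. It is exclusively autocatalytic if: (i) there is $\mathbf v\in\mathbb R^{\mathcal R'}$, $\mathbf v\gg\mathbf0$, with $(\mathbb S)_{\mathcal M}^{\mathcal R'}\mathbf v\gg\mathbf 0$; (ii) every row of $(\mathbb S^-)_{\mathcal M}^{\mathcal R'}$ is semi-positive; (iii)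 every column of $(\mathbb S^-)_{\mathcal M}^{\mathcal R'}$ is semi-positive. An autocatalytic core is an exclusively autocatalytic motif $(A_C,\mathcal R_A)$ such that no motif $(\mathcal M',\mathcal R'')\neq(A_C,\mathcal R_A)$ with $\mathcal M'\subseteq A_C$ and $\mathcal R''\subseteq\mathcal R_A$ is exclusively autocatalytic. A real matrix $\mathbb A$ is semi-positive if there is $\mathbf v\gg\mathbf 0$ with $\mathbb A\mathbf v\gg\mathbf0$; it is minimal semi-positive if it is semi-positive and no matrix obtained from $\mathbb A$ by deleting one or more columns is semi-positive. *)

theory Defs
  imports Complex_Main
begin

text \<open>A CRN: species set S, reaction set R (both finite), with input complexes
  inp r and output complexes out r (vectors in Z_{>=0}^S, as functions 's => nat).\<close>

definition stoich :: "('r \<Rightarrow> 's \<Rightarrow> nat) \<Rightarrow> ('r \<Rightarrow> 's \<Rightarrow> nat) \<Rightarrow> 's \<Rightarrow> 'r \<Rightarrow> real" where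
  "stoich inp out s r = real (out r s) - real (inp r s)"

definition semipositive_mat :: "('i \<Rightarrow> 'j \<Rightarrow> real) \<Rightarrow> 'i set \<Rightarrow> 'j set \<Rightarrow> bool" where
  "semipositive_mat A I J \<longleftrightarrow>
     (\<exists>v :: 'j \<Rightarrow> real. (\<forall>j\<in>J. v j > 0) \<and> (\<forall>i\<in>I. (\<Sum>j\<in>J. A i j * v j) > 0))"

definition minimal_semipositive_mat :: "('i \<Rightarrow> 'j \<Rightarrow> real) \<Rightarrow> 'i set \<Rightarrow> 'j set \<Rightarrow> bool" where
  "minimal_semipositive_mat A I J \<longleftrightarrow>
     semipositive_mat A I J \<and> (\<forall>J'. J' \<subset> J \<longrightarrow> \<not> semipositive_mat A I J')"

definition excl_autocatalytic ::
  "'s set \<Rightarrow> 'r set \<Rightarrow> ('r \<Rightarrow> 's \<Rightarrow> nat) \<Rightarrow> ('r \<Rightarrow> 's \<Rightarrow> nat) \<Rightarrow> 's set \<Rightarrow> 'r set \<Rightarrow> bool" where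
  "excl_autocatalytic S R inp out M R' \<longleftrightarrow>
     M \<subseteq> S \<and> R' \<subseteq> R \<and> M \<noteq> {} \<and> R' \<noteq> {} \<and>
     semipositive_mat (stoich inp out) M R' \<and>
     (\<forall>s\<in>M. \<exists>r\<in>R'. inp r s \<noteq> 0) \<and>
     (\<forall>r\<in>R'. \<exists>s\<in>M. inp r s \<noteq> 0)"

definition autocatalytic_core ::
  "'s set \<Rightarrow> 'r set \<Rightarrow> ('r \<Rightarrow> 's \<Rightarrow> nat) \<Rightarrow> ('r \<Rightarrow> 's \<Rightarrow> nat) \<Rightarrow> 's set \<Rightarrow> 'r set \<Rightarrow> bool" where
  "autocatalytic_core S R inp out A RA \<longleftrightarrow>
     excl_autocatalytic S R inp out A RA \<and>
     (\<forall>M' R''. M' \<subseteq> A \<and> R'' \<subseteq> RA \<and> (M', R'') \<noteq> (A, RA) \<longrightarrow>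
        \<not> excl_autocatalytic S R inp out M' R'')"

end

theory Submission
  imports Defs
begin

text \<open>If a proper subset \<open>J\<close> of the reactions of a core still gave a semi-positive
  matrix on the core's species, then the species consumed by \<open>J\<close>, together with \<open>J\<close>,
  would form a strictly smaller exclusively autocatalytic motif, contradicting minimality
  of the core.\<close>

lemma semipositive_mat_subset_rows:
  assumes "semipositive_mat A I J" and "I' \<subseteq> I"
  shows "semipositive_mat A I' J"
  using assms unfolding semipositive_mat_def by blast

lemma semipositive_mat_cols_nonempty:
  assumes "semipositive_mat A I J" and "I \<noteq> {}"
  shows "J \<noteq> {}"
  using assms unfolding semipositive_mat_def by fastforce

lemma excl_autocatalytic_consumed_species:
  assumes ex: "excl_autocatalytic S R inp out M R'"
    and J: "J \<subseteq> R'" and sp: "semipositive_mat (stoich inp out) M J"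
  shows "excl_autocatalytic S R inp out {s\<in>M. \<exists>r\<in>J. inp r s \<noteq> 0} J"
proof -
  let ?M = "{s\<in>M. \<exists>r\<in>J. inp r s \<noteq> 0}"
  have "M \<subseteq> S" "R' \<subseteq> R" "M \<noteq> {}" and cols: "\<forall>r\<in>R'. \<exists>s\<in>M. inp r s \<noteq> 0"
    using ex unfolding excl_autocatalytic_def by blast+
  moreover have "J \<noteq> {}"
    using sp \<open>M \<noteq> {}\<close> by (rule semipositive_mat_cols_nonempty)
  moreover have "semipositive_mat (stoich inp out) ?M J"
    using sp by (rule semipositive_mat_subset_rows) auto
  moreover have "\<forall>r\<in>J. \<exists>s\<in>?M. inp r s \<noteq> 0"
    using cols J by blast
  ultimately show ?thesis
    using J unfolding excl_autocatalytic_def by blast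
qed

theorem mainTheorem4:
  fixes S :: "'s set" and R :: "'r set" and inp out :: "'r \<Rightarrow> 's \<Rightarrow> nat"
    and A :: "'s set" and RA :: "'r set"
  assumes "finite S" and "finite R"
    and "autocatalytic_core S R inp out A RA"
  shows "minimal_semipositive_mat (stoich inp out) A RA"
proof -
  have ex: "excl_autocatalytic S R inp out A RA"
    and core: "\<And>M' R''. M' \<subseteq> A \<Longrightarrow> R'' \<subseteq> RA \<Longrightarrow> (M', R'') \<noteq> (A, RA) \<Longrightarrow>
        \<not> excl_autocatalytic S R inp out M' R''"
    using assms(3) unfolding autocatalytic_core_def by blast+
  have "\<not> semipositive_mat (stoich inp out) A J" if "J \<subset> RA" for J
  proof
    assume "semipositive_mat (stoich inp out) A J"
    with ex \<open>J \<subset> RA\<close> have "excl_autocatalytic S R inp out {s\<in>A. \<exists>r\<in>J. inp r s \<noteq> 0} J"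
      by (intro excl_autocatalytic_consumed_species) auto
    with core[of "{s\<in>A. \<exists>r\<in>J. inp r s \<noteq> 0}" J] \<open>J \<subset> RA\<close> show False
      by auto
  qed
  moreover have "semipositive_mat (stoich inp out) A RA"
    using ex unfolding excl_autocatalytic_def by blast
  ultimately show ?thesis
    unfolding minimal_semipositive_mat_def by blast
qed

end
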